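(* Consider the kinodynamic planning setting described in the context, with kinodynamic cost $c^*$ satisfying the triangle inequality, a learned steering function $\tilde S$ with the stated probability-$p$ property, a valid trajectory $\pi:[0,t_\pi]\to X_{\mathrm{free}}$ from $x_{\mathrm{init}}$ to $x_{\mathrm{goal}}$ of clearance $\delta_{\mathrm{clear}}>0$, $v=\min(\delta_{\mathrm{clear}},\delta_{\mathrm{goal}})$, and points $x_0=x_{\mathrm{init}},\dots,x_m=x_{\mathrm{goal}}$ on $\pi$ with $c^*(x_i,x_{i+1})\le v/3$ for all $0\le i<m$. Suppose the S3F-RRT* tree contains a vertex $x_i'$ with $x_i'\in B_{v/3}(x_i)$ for some $0\le i<m$. If a sampled state $x_{\mathrm{rand}}$ satisfies $x_{\mathrm{rand}}\in B_{v/3}(x_{i+1})$ and $c^*(x_i,x_{\mathrm{rand}})\le v/3$, and $x_{\mathrm{near}}$ is the nearest neighbor of $x_{\mathrm{rand}}$ among the tree vertices (i.e. a tree vertex minimizing $c^*(\cdot,x_{\mathrm{rand}})$), then with probability $p$ the path produced by $\tilde S(x_{\mathrm{near}},x_{\mathrm{rand}})$ from $x_{\mathrm{near}}$ to $x_{\mathrm{rand}}$ lies entirely in $X_{\mathrm{free}}$.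
   Context: State space $X$, obstacle-free set $X_{\mathrm{free}}\subseteq X$, robot dynamics $\dot x=f(x,u)$ with controls $u\in U$. For $x_a,x_b\in X$, $c^*(x_a,x_b)$ is the cost (e.g. duration) of the optimal dynamically feasible trajectory from $x_a$ to $x_b$ (the kinodynamic distance); it is assumed to satisfy $c^*(x_a,x_b)\le c^*(x_a,x)+c^*(x,x_b)$ for all $x\in X$. $B_r(x)=\{x'\in X: c^*(x',x)\le r\}$. A learned steering function $\tilde S(x_a,x_b)$ returns a control function whose integration from $x_a$ under the dynamics gives a state function $\tilde\Gamma:[0,t_f]\to X$; it is assumed that with nonzero probability $p$, $\tilde\Gamma$ satisfies $c^*(\tilde\Gamma(t),x_b)\le c^*(x_a,x_b)$ for all $t\in[0,t_f]$. The goal region contains a ball $X^*_{\mathrm{goal}}=B_{\delta_{\mathrm{goal}}}(x_{\mathrm{goal}})$ with $\delta_{\mathrm{goal}}>0$. The clearance of a trajectory $\pi$ is the maximal $\delta_{\mathrm{clear}}$ such that $B_{\delta_{\mathrm{clear}}}(\pi(t))\subseteq X_{\mathrm{free}}$ for all $t\in[0,t_\pi]$. S3F-RRT* is an RRT*-type planner that builds a tree rooted at $x_{\mathrm{init}}$: each iteration samples a random collision-free state $x_{\mathrm{rand}}$, considers tree vertices near $x_{\mathrm{rand}}$ as candidate parents, steers from each with $\tilde S$, and adds the end state of the lowest-cost collision-free steered trajectory ending within an error radius of $x_{\mathrm{rand}}$ as a new vertex, followed by a rewiring step. *)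

theory Defs
  imports "HOL-Probability.Probability"
begin

definition kball :: "('x \<Rightarrow> 'x \<Rightarrow> real) \<Rightarrow> real \<Rightarrow> 'x \<Rightarrow> 'x set" where
  "kball c r x = {x'. c x' x \<le> r}"

definition is_clearance ::
  "('x \<Rightarrow> 'x \<Rightarrow> real) \<Rightarrow> 'x set \<Rightarrow> (real \<Rightarrow> 'x) \<Rightarrow> real \<Rightarrow> real \<Rightarrow> bool" where
  "is_clearance c Xfree traj tpi delta \<longleftrightarrow>
     (\<forall>t\<in>{0..tpi}. kball c delta (traj t) \<subseteq> Xfree) \<and>
     (\<forall>d. (\<forall>t\<in>{0..tpi}. kball c d (traj t) \<subseteq> Xfree) \<longrightarrow> d \<le> delta)"

end

theory Submission
  imports Defs
begin

text \<open>The nearest vertex is at most as far from x_rand as the vertex x_i' near x_i, which by the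
  triangle inequality is within 2v/3 of x_rand. A good steered path never gets farther from x_rand
  than its start, and x_rand is within v/3 of the waypoint x_(i+1); so the whole path stays in the
  ball of radius v \<le> \<delta>_clear around x_(i+1), which is obstacle-free by the clearance of \<pi>.\<close>

lemma kball_subset_free_if_clearance:
  assumes "is_clearance c Xfree traj tpi d" and "t \<in> {0..tpi}"
  shows "kball c d (traj t) \<subseteq> Xfree"
  using assms unfolding is_clearance_def by blast

lemma nearest_cost_le_via_vertex:
  fixes c :: "'x \<Rightarrow> 'x \<Rightarrow> real"
  assumes tri: "\<And>a b y. c a b \<le> c a y + c y b"
    and near_min: "\<forall>y\<in>V. c xnear xrand \<le> c y xrand" and "x' \<in> V"
    and "c x' w \<le> r" and "c w xrand \<le> r"
  shows "c xnear xrand \<le> 2 * r"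
proof -
  have "c xnear xrand \<le> c x' xrand" using near_min \<open>x' \<in> V\<close> by blast
  also have "\<dots> \<le> c x' w + c w xrand" by (rule tri)
  finally show ?thesis using assms(4,5) by linarith
qed

lemma in_kball_if_no_farther:
  fixes c :: "'x \<Rightarrow> 'x \<Rightarrow> real"
  assumes tri: "\<And>a b y. c a b \<le> c a y + c y b"
    and "c y xrand \<le> c z xrand" and "c z xrand \<le> 2 * r" and "c xrand w \<le> r"
  shows "y \<in> kball c (3 * r) w"
proof -
  have "c y w \<le> c y xrand + c xrand w" by (rule tri)
  also have "\<dots> \<le> 3 * r" using assms(2-4) by linarith
  finally show ?thesis unfolding kball_def by simp
qed

theorem lemma2p1:
  fixes c :: "'x \<Rightarrow> 'x \<Rightarrow> real"
    and Xfree :: "'x set"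
    and Phi :: "'x \<Rightarrow> (real \<Rightarrow> 'u) \<Rightarrow> real \<Rightarrow> 'x"
    and Steer :: "'x \<Rightarrow> 'x \<Rightarrow> (real \<times> (real \<Rightarrow> 'u)) measure"
    and p :: real
    and traj :: "real \<Rightarrow> 'x" and tpi :: real
    and xinit xgoal :: 'x
    and dclear dgoal :: real
    and x :: "nat \<Rightarrow> 'x" and s :: "nat \<Rightarrow> real" and m :: nat
    and V :: "'x set" and xi' xrand xnear :: 'x and i :: nat
  assumes tri: "\<And>a b y. c a b \<le> c a y + c y b"
    and Phi0: "\<And>xa u. Phi xa u 0 = xa"
    and steer_prob: "\<And>xa xb. prob_space (Steer xa xb)"
    and p_pos: "p > 0"
    and steer_good: "\<And>xa xb. \<exists>E\<in>sets (Steer xa xb). measure (Steer xa xb) E \<ge> p \<and>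
            E \<subseteq> {(tf, u). \<forall>t\<in>{0..tf}. c (Phi xa u t) xb \<le> c xa xb}"
    and traj_dyn: "\<exists>u. \<forall>t\<in>{0..tpi}. traj t = Phi xinit u t"
    and traj_free: "\<forall>t\<in>{0..tpi}. traj t \<in> Xfree"
    and traj_start: "traj 0 = xinit" and traj_end: "traj tpi = xgoal" and ttraj_nn: "0 \<le> tpi"
    and clear: "is_clearance c Xfree traj tpi dclear" and dclear_pos: "dclear > 0"
    and dgoal_pos: "dgoal > 0"
    and pts: "\<forall>k\<le>m. 0 \<le> s k \<and> s k \<le> tpi \<and> x k = traj (s k)"
    and x0: "x 0 = xinit" and xm: "x m = xgoal"
    and steps: "\<forall>k<m. c (x k) (x (Suc k)) \<le> min dclear dgoal / 3"
    and i_lt: "i < m"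
    and xi'_V: "xi' \<in> V" and xi'_ball: "xi' \<in> kball c (min dclear dgoal / 3) (x i)"
    and xrand_free: "xrand \<in> Xfree"
    and xrand_ball: "xrand \<in> kball c (min dclear dgoal / 3) (x (Suc i))"
    and xrand_close: "c (x i) xrand \<le> min dclear dgoal / 3"
    and near_V: "xnear \<in> V" and near_min: "\<forall>y\<in>V. c xnear xrand \<le> c y xrand"
  shows "\<exists>E\<in>sets (Steer xnear xrand). measure (Steer xnear xrand) E \<ge> p \<and>
            E \<subseteq> {(tf, u). \<forall>t\<in>{0..tf}. Phi xnear u t \<in> Xfree}"
proof -
  let ?r = "min dclear dgoal / 3"
  have near_close: "c xnear xrand \<le> 2 * ?r"
    using nearest_cost_le_via_vertex[OF tri near_min xi'_V _ xrand_close] xi'_ball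
    by (simp add: kball_def)
  have waypoint_ball_free: "kball c (3 * ?r) (x (Suc i)) \<subseteq> Xfree"
  proof -
    have "kball c dclear (x (Suc i)) \<subseteq> Xfree"
      using kball_subset_free_if_clearance[OF clear] pts i_lt by (metis Suc_leI atLeastAtMost_iff)
    moreover have "kball c (3 * ?r) (x (Suc i)) \<subseteq> kball c dclear (x (Suc i))"
      by (auto simp: kball_def)
    ultimately show ?thesis by blast
  qed
  have "{(tf, u). \<forall>t\<in>{0..tf}. c (Phi xnear u t) xrand \<le> c xnear xrand}
        \<subseteq> {(tf, u). \<forall>t\<in>{0..tf}. Phi xnear u t \<in> Xfree}"
    using in_kball_if_no_farther[OF tri _ near_close] xrand_ball waypoint_ball_free
    by (fastforce simp: kball_def)
  then show ?thesis
    using steer_good[of xnear xrand] by blast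
qed

end
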